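(* Let $\mathcal{U}=\{\bm{x}_1,\dots,\bm{x}_{n_u}\}\subset\mathbb{R}^d$ be a finite set of unlabeled samples, and let $g_{\bm\theta}:\mathbb{R}^d\to\mathbb{R}^{m}\setminus\{0\}$ be a network with parameters $\bm\theta$, with normalized embedding $\tilde g(\bm x)=g_{\bm\theta}(\bm x)/\|g_{\bm\theta}(\bm x)\|_2$. Let $\mathcal{U}=\mathcal{S}_0\cup\mathcal{S}_1$ be a fixed partition (not depending on $\bm\theta$) into nonempty sets, where $\mathcal{S}_c$ is the set of samples whose classifier-predicted label is $\tilde y=c$, and let $\bm\nu_c=\frac{1}{|\mathcal{S}_c|}\sum_{\bm x\in\mathcal{S}_c}\tilde g(\bm x)$ and $\tilde{\bm\nu}_c=\bm\nu_c/\|\bm\nu_c\|$ (assumed $\bm\nu_c\neq 0$). Define the clustering objective $$\mathcal{R}(\bm\theta)=\frac{2}{n_u}\sum_{c\in\{0,1\}}\sum_{\bm x\in\mathcal{S}_c}\|\tilde g(\bm x)-\bm\nu_c\|^2$$ and the (pseudo-label complete-data) log-likelihood $$\ell(\bm\theta)=\sum_{\bm x\in\mathcal{U}}\sum_{y\in\{0,1\}}\mathbb{1}(\tilde y=y)\log p(\bm x,y\mid\bm\theta).$$ Assume each class-conditional distribution in representation space is a von Mises–Fisher distribution, $p(\bm x\mid y=c,\bm\theta)=c_d(\kappa)\,e^{\kappa\tilde{\bm\nu}_c^\top\tilde g(\bm x)}$ with fixed concentration parameter $\kappa>0$ and normalization constant $c_d(\kappa)$, and that the class prior is uniform, $p(y=0)=p(y=1)=1/2$.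 Then minimizing $\mathcal{R}(\bm\theta)$ over $\bm\theta$ is equivalent to maximizing $$L_1=\sum_{c\in\{0,1\}}\frac{|\mathcal{S}_c|}{n_u}\|\bm\nu_c\|^2,$$ maximizing $\ell(\bm\theta)$ over $\bm\theta$ is equivalent to maximizing $$L_2=\sum_{c\in\{0,1\}}\frac{|\mathcal{S}_c|}{n_u}\|\bm\nu_c\|,$$ and $L_1\le L_2$.
   Context: Here "equivalent" means the two objectives have the same set of optimizers over $\bm\theta$ (they differ by a strictly monotone transformation not depending on $\bm\theta$). The setting is positive-unlabeled learning: the labels of unlabeled samples are replaced by pseudo-labels $\tilde y=\arg\max_c f_c(\bm x)$ from a classifier $f$, and the latent class variable's posterior is taken to be the indicator $\mathbb{1}(\tilde y=y)$. *)

theory Defs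
  imports "HOL-Analysis.Analysis"
begin

text \<open>Classes are indexed by naturals; only c \<in> {0,1} is used.
  g :: parameter \<Rightarrow> sample \<Rightarrow> representation; S c = samples with predicted label c.\<close>

definition gnorm :: "('p \<Rightarrow> 'x \<Rightarrow> 'v::real_normed_vector) \<Rightarrow> 'p \<Rightarrow> 'x \<Rightarrow> 'v" where
  "gnorm g \<theta> x = (1 / norm (g \<theta> x)) *\<^sub>R g \<theta> x"

definition cmean :: "('p \<Rightarrow> 'x \<Rightarrow> 'v::real_normed_vector) \<Rightarrow> (nat \<Rightarrow> 'x set) \<Rightarrow> 'p \<Rightarrow> nat \<Rightarrow> 'v" where
  "cmean g S \<theta> c = (1 / real (card (S c))) *\<^sub>R (\<Sum>x\<in>S c. gnorm g \<theta> x)"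

definition cmean_dir :: "('p \<Rightarrow> 'x \<Rightarrow> 'v::real_normed_vector) \<Rightarrow> (nat \<Rightarrow> 'x set) \<Rightarrow> 'p \<Rightarrow> nat \<Rightarrow> 'v" where
  "cmean_dir g S \<theta> c = (1 / norm (cmean g S \<theta> c)) *\<^sub>R cmean g S \<theta> c"

definition clust_obj :: "('p \<Rightarrow> 'x \<Rightarrow> 'v::real_normed_vector) \<Rightarrow> 'x set \<Rightarrow> (nat \<Rightarrow> 'x set) \<Rightarrow> 'p \<Rightarrow> real" where
  "clust_obj g U S \<theta> = 2 / real (card U) *
     (\<Sum>c\<in>{0,1}. \<Sum>x\<in>S c. (norm (gnorm g \<theta> x - cmean g S \<theta> c))\<^sup>2)"

definition vmf :: "real \<Rightarrow> real \<Rightarrow> 'v::real_inner \<Rightarrow> 'v \<Rightarrow> real" where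
  "vmf cd \<kappa> \<mu> z = cd * exp (\<kappa> * (\<mu> \<bullet> z))"

text \<open>Pseudo-label complete-data log-likelihood, with p(x,y|theta) = p(x|y,theta) p(y), p(y)=1/2,
  and pseudo-label posterior 1(ytilde = y), ytilde = c iff x \<in> S c.\<close>
definition loglik :: "real \<Rightarrow> real \<Rightarrow> ('p \<Rightarrow> 'x \<Rightarrow> 'v::real_inner) \<Rightarrow> 'x set \<Rightarrow> (nat \<Rightarrow> 'x set) \<Rightarrow> 'p \<Rightarrow> real" where
  "loglik cd \<kappa> g U S \<theta> =
     (\<Sum>x\<in>U. \<Sum>y\<in>{0,1}. (if x \<in> S y then 1 else 0) *
        ln (vmf cd \<kappa> (cmean_dir g S \<theta> y) (gnorm g \<theta> x) * (1/2)))"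

definition L1 :: "('p \<Rightarrow> 'x \<Rightarrow> 'v::real_normed_vector) \<Rightarrow> 'x set \<Rightarrow> (nat \<Rightarrow> 'x set) \<Rightarrow> 'p \<Rightarrow> real" where
  "L1 g U S \<theta> = (\<Sum>c\<in>{0,1}. real (card (S c)) / real (card U) * (norm (cmean g S \<theta> c))\<^sup>2)"

definition L2 :: "('p \<Rightarrow> 'x \<Rightarrow> 'v::real_normed_vector) \<Rightarrow> 'x set \<Rightarrow> (nat \<Rightarrow> 'x set) \<Rightarrow> 'p \<Rightarrow> real" where
  "L2 g U S \<theta> = (\<Sum>c\<in>{0,1}. real (card (S c)) / real (card U) * norm (cmean g S \<theta> c))"

definition maximizers :: "('p \<Rightarrow> real) \<Rightarrow> 'p set" where
  "maximizers f = {\<theta>. \<forall>\<theta>'. f \<theta>' \<le> f \<theta>}"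

definition equiv_max :: "('p \<Rightarrow> real) \<Rightarrow> ('p \<Rightarrow> real) \<Rightarrow> bool" where
  "equiv_max f h \<longleftrightarrow> (\<exists>\<phi>::real \<Rightarrow> real. strict_mono \<phi> \<and> (\<forall>\<theta>. f \<theta> = \<phi> (h \<theta>)))
                      \<and> maximizers f = maximizers h"

end

theory Submission
  imports Defs
begin

text \<open>Both objectives are affine in the norms of the class means \<open>\<nu>\<^sub>c\<close>, with positive
  slope. The normalized embeddings are unit vectors, so the within-class sum of squared distances
  to \<open>\<nu>\<^sub>c\<close> is \<open>|S\<^sub>c| (1 - \<parallel>\<nu>\<^sub>c\<parallel>\<^sup>2)\<close>, whence \<open>-R = 2 L\<^sub>1 - 2\<close>. The von Mises--Fisher
  log-density is affine in the inner product of the mean direction with the embedding, and summed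
  over \<open>S\<^sub>c\<close> that inner product becomes \<open>|S\<^sub>c| \<parallel>\<nu>\<^sub>c\<parallel>\<close>, whence the log-likelihood is
  \<open>|U| (ln c\<^sub>d - ln 2) + \<kappa> |U| L\<^sub>2\<close>. Finally \<open>\<parallel>\<nu>\<^sub>c\<parallel> \<le> 1\<close> gives \<open>\<parallel>\<nu>\<^sub>c\<parallel>\<^sup>2 \<le> \<parallel>\<nu>\<^sub>c\<parallel>\<close>.\<close>

lemma equiv_maxI:
  assumes "strict_mono (\<phi>::real \<Rightarrow> real)" and "\<And>\<theta>. f \<theta> = \<phi> (h \<theta>)"
  shows "equiv_max f h"
  unfolding equiv_max_def maximizers_def
  using assms by (auto simp: strict_mono_less_eq)

lemma sum_eq_card_scaleR_mean:
  fixes z :: "'a \<Rightarrow> 'v::real_vector"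
  shows "(\<Sum>x\<in>A. z x) = real (card A) *\<^sub>R ((1 / real (card A)) *\<^sub>R (\<Sum>x\<in>A. z x))"
proof (cases "card A = 0")
  case True
  then have "A = {} \<or> infinite A" by (simp add: card_eq_0_iff)
  then show ?thesis by auto
qed simp

lemma sum_power2_norm_diff_mean:
  fixes z :: "'a \<Rightarrow> 'v::real_inner" and A :: "'a set"
  defines "\<nu> \<equiv> (1 / real (card A)) *\<^sub>R (\<Sum>x\<in>A. z x)"
  shows "(\<Sum>x\<in>A. (norm (z x - \<nu>))\<^sup>2) = (\<Sum>x\<in>A. (norm (z x))\<^sup>2) - real (card A) * (norm \<nu>)\<^sup>2"
proof -
  have sum_z: "(\<Sum>x\<in>A. z x) = real (card A) *\<^sub>R \<nu>"
    unfolding \<nu>_def by (rule sum_eq_card_scaleR_mean)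
  have "(\<Sum>x\<in>A. (norm (z x - \<nu>))\<^sup>2) = (\<Sum>x\<in>A. (norm (z x))\<^sup>2 - 2 * (z x \<bullet> \<nu>) + (norm \<nu>)\<^sup>2)"
    by (simp add: power2_norm_eq_inner inner_commute algebra_simps)
  also have "\<dots> = (\<Sum>x\<in>A. (norm (z x))\<^sup>2) - 2 * ((\<Sum>x\<in>A. z x) \<bullet> \<nu>) + real (card A) * (norm \<nu>)\<^sup>2"
    by (simp add: sum.distrib sum_subtractf inner_sum_left sum_distrib_left)
  also have "\<dots> = (\<Sum>x\<in>A. (norm (z x))\<^sup>2) - real (card A) * (norm \<nu>)\<^sup>2"
    by (simp add: sum_z power2_norm_eq_inner)
  finally show ?thesis .
qed

lemma norm_mean_le_1:
  fixes z :: "'a \<Rightarrow> 'v::real_normed_vector"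
  assumes "\<And>x. x \<in> A \<Longrightarrow> norm (z x) \<le> 1"
  shows "norm ((1 / real (card A)) *\<^sub>R (\<Sum>x\<in>A. z x)) \<le> 1"
proof (cases "card A = 0")
  case False
  have "norm (\<Sum>x\<in>A. z x) \<le> (\<Sum>x\<in>A. norm (z x))" by (rule norm_sum)
  also have "\<dots> \<le> real (card A)" using sum_mono[of A "\<lambda>x. norm (z x)" "\<lambda>_. 1"] assms by simp
  finally show ?thesis using False by (simp add: field_simps)
qed simp

lemma inner_normalized_self:
  fixes v :: "'v::real_inner"
  shows "((1 / norm v) *\<^sub>R v) \<bullet> v = norm v"
  by (cases "v = 0") (simp_all add: power2_norm_eq_inner[symmetric] power2_eq_square)

lemma vmf_pos: "cd > 0 \<Longrightarrow> vmf cd \<kappa> \<mu> z > 0"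
  by (simp add: vmf_def)

lemma ln_vmf:
  assumes "cd > 0"
  shows "ln (vmf cd \<kappa> \<mu> z) = ln cd + \<kappa> * (\<mu> \<bullet> z)"
  using assms by (simp add: vmf_def ln_mult)

lemma norm_gnorm:
  assumes "g \<theta> x \<noteq> 0"
  shows "norm (gnorm g \<theta> x) = 1"
  using assms by (simp add: gnorm_def)

lemma sum_pseudo_label_indicator:
  fixes f :: "'y \<Rightarrow> 'x \<Rightarrow> 'a::semiring_1"
  assumes "finite U" and "\<And>y. y \<in> Y \<Longrightarrow> S y \<subseteq> U"
  shows "(\<Sum>x\<in>U. \<Sum>y\<in>Y. (if x \<in> S y then 1 else 0) * f y x) = (\<Sum>y\<in>Y. \<Sum>x\<in>S y. f y x)"
proof -
  have "(\<Sum>x\<in>U. \<Sum>y\<in>Y. (if x \<in> S y then 1 else 0) * f y x)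
      = (\<Sum>y\<in>Y. \<Sum>x\<in>U. (if x \<in> S y then f y x else 0))"
    by (subst sum.swap) (intro sum.cong refl; simp)
  also have "\<dots> = (\<Sum>y\<in>Y. \<Sum>x\<in>U \<inter> S y. f y x)"
    by (simp add: sum.inter_restrict[OF assms(1)])
  also have "\<dots> = (\<Sum>y\<in>Y. \<Sum>x\<in>S y. f y x)"
    using assms(2) by (intro sum.cong) (auto simp: Int_absorb1)
  finally show ?thesis .
qed

lemma card_mult_weighted_sum:
  assumes "card U \<noteq> 0"
  shows "real (card U) * (\<Sum>c\<in>C. real (card (S c)) / real (card U) * a c)
    = (\<Sum>c\<in>C. real (card (S c)) * a c)"
  using assms by (simp add: sum_distrib_left)

locale pseudo_label_partition =
  fixes U :: "'x set" and S :: "nat \<Rightarrow> 'x set" and g :: "'p \<Rightarrow> 'x \<Rightarrow> 'v::real_inner"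
  assumes finite_U: "finite U"
    and U_eq: "U = S 0 \<union> S 1"
    and S_disjoint: "S 0 \<inter> S 1 = {}"
    and g_nonzero: "\<And>\<theta> x. x \<in> U \<Longrightarrow> g \<theta> x \<noteq> 0"
begin

lemma class_subset: "c \<in> {0,1} \<Longrightarrow> S c \<subseteq> U"
  using U_eq by auto

lemma finite_class: "c \<in> {0,1} \<Longrightarrow> finite (S c)"
  by (rule finite_subset[OF class_subset finite_U])

lemma card_U: "real (card U) = (\<Sum>c\<in>{0,1}. real (card (S c)))"
  using finite_class U_eq S_disjoint by (simp add: card_Un_disjoint)

lemma norm_gnorm_class: "c \<in> {0,1} \<Longrightarrow> x \<in> S c \<Longrightarrow> norm (gnorm g \<theta> x) = 1"
  by (intro norm_gnorm g_nonzero subsetD[OF class_subset])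

lemma sum_power2_dist_cmean:
  assumes "c \<in> {0,1}"
  shows "(\<Sum>x\<in>S c. (norm (gnorm g \<theta> x - cmean g S \<theta> c))\<^sup>2)
    = real (card (S c)) - real (card (S c)) * (norm (cmean g S \<theta> c))\<^sup>2"
proof -
  have "(\<Sum>x\<in>S c. (norm (gnorm g \<theta> x))\<^sup>2) = real (card (S c))"
    using norm_gnorm_class[OF assms] by simp
  then show ?thesis
    using sum_power2_norm_diff_mean[of "gnorm g \<theta>" "S c"] by (simp add: cmean_def)
qed

lemma norm_cmean_le_1: "c \<in> {0,1} \<Longrightarrow> norm (cmean g S \<theta> c) \<le> 1"
  unfolding cmean_def by (rule norm_mean_le_1) (simp add: norm_gnorm_class)

lemma neg_clust_obj_eq:
  assumes "U \<noteq> {}"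
  shows "- clust_obj g U S \<theta> = 2 * L1 g U S \<theta> - 2"
proof -
  define N where "N = real (card U)"
  have "N > 0" using assms finite_U by (simp add: N_def card_gt_0_iff)
  have N_L1: "N * L1 g U S \<theta> = (\<Sum>c\<in>{0,1}. real (card (S c)) * (norm (cmean g S \<theta> c))\<^sup>2)"
    unfolding L1_def N_def by (rule card_mult_weighted_sum) (use \<open>N > 0\<close> N_def in simp)
  have "clust_obj g U S \<theta>
      = 2 / N * (\<Sum>c\<in>{0,1}. real (card (S c)) - real (card (S c)) * (norm (cmean g S \<theta> c))\<^sup>2)"
    unfolding clust_obj_def N_def by (simp add: sum_power2_dist_cmean)
  also have "\<dots> = 2 / N * (N - N * L1 g U S \<theta>)"
    by (simp only: sum_subtractf card_U[folded N_def, symmetric] N_L1)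
  also have "\<dots> = 2 - 2 * L1 g U S \<theta>"
    using \<open>N > 0\<close> by (simp add: field_simps)
  finally show ?thesis by simp
qed

lemma loglik_class:
  assumes "c \<in> {0,1}" and "cd > 0"
  shows "(\<Sum>x\<in>S c. ln (vmf cd \<kappa> (cmean_dir g S \<theta> c) (gnorm g \<theta> x) * (1/2)))
    = real (card (S c)) * (ln cd - ln 2) + \<kappa> * (real (card (S c)) * norm (cmean g S \<theta> c))"
proof -
  let ?\<nu> = "cmean g S \<theta> c"
  have "(\<Sum>x\<in>S c. ln (vmf cd \<kappa> (cmean_dir g S \<theta> c) (gnorm g \<theta> x) * (1/2)))
      = (\<Sum>x\<in>S c. (ln cd - ln 2) + \<kappa> * (cmean_dir g S \<theta> c \<bullet> gnorm g \<theta> x))"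
    using assms(2) by (simp add: ln_div vmf_pos[THEN order_less_imp_not_eq2] ln_vmf diff_add_eq)
  also have "\<dots> = real (card (S c)) * (ln cd - ln 2) + \<kappa> * (cmean_dir g S \<theta> c \<bullet> (\<Sum>x\<in>S c. gnorm g \<theta> x))"
    by (simp add: sum.distrib inner_sum_right sum_distrib_left)
  also have "(\<Sum>x\<in>S c. gnorm g \<theta> x) = real (card (S c)) *\<^sub>R ?\<nu>"
    unfolding cmean_def by (rule sum_eq_card_scaleR_mean)
  moreover have "cmean_dir g S \<theta> c \<bullet> ?\<nu> = norm ?\<nu>"
    unfolding cmean_dir_def by (rule inner_normalized_self)
  ultimately show ?thesis by simp
qed

lemma loglik_eq:
  assumes "cd > 0"
  shows "loglik cd \<kappa> g U S \<theta> = real (card U) * (ln cd - ln 2) + \<kappa> * real (card U) * L2 g U S \<theta>"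
proof (cases "U = {}")
  case False
  define N where "N = real (card U)"
  have "N > 0" using False finite_U by (simp add: N_def card_gt_0_iff)
  have N_L2: "N * L2 g U S \<theta> = (\<Sum>c\<in>{0,1}. real (card (S c)) * norm (cmean g S \<theta> c))"
    unfolding L2_def N_def by (rule card_mult_weighted_sum) (use \<open>N > 0\<close> N_def in simp)
  have "loglik cd \<kappa> g U S \<theta>
      = (\<Sum>c\<in>{0,1}. \<Sum>x\<in>S c. ln (vmf cd \<kappa> (cmean_dir g S \<theta> c) (gnorm g \<theta> x) * (1/2)))"
    unfolding loglik_def by (rule sum_pseudo_label_indicator[OF finite_U]) (rule class_subset)
  also have "\<dots>
      = (\<Sum>c\<in>{0,1}. real (card (S c)) * (ln cd - ln 2) + \<kappa> * (real (card (S c)) * norm (cmean g S \<theta> c)))"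
    by (intro sum.cong refl loglik_class assms)
  also have "\<dots> = (\<Sum>c\<in>{0,1}. real (card (S c))) * (ln cd - ln 2)
      + \<kappa> * (\<Sum>c\<in>{0,1}. real (card (S c)) * norm (cmean g S \<theta> c))"
    by (simp add: algebra_simps)
  also have "\<dots> = N * (ln cd - ln 2) + \<kappa> * N * L2 g U S \<theta>"
    by (simp only: card_U[folded N_def, symmetric] N_L2 mult.assoc)
  finally show ?thesis by (simp add: N_def)
qed (simp add: loglik_def L2_def)

lemma L1_le_L2: "L1 g U S \<theta> \<le> L2 g U S \<theta>"
proof -
  have "(norm (cmean g S \<theta> c))\<^sup>2 \<le> norm (cmean g S \<theta> c)" if "c \<in> {0,1}" for c
    using norm_cmean_le_1[OF that] by (simp add: power2_eq_square mult_left_le)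
  then show ?thesis
    unfolding L1_def L2_def by (intro sum_mono mult_left_mono) auto
qed

end

theorem theorem1:
  fixes U :: "(real ^ 'd) set"
    and S :: "nat \<Rightarrow> (real ^ 'd) set"
    and g :: "'p \<Rightarrow> real ^ 'd \<Rightarrow> real ^ 'm"
    and \<kappa> cd :: real
  assumes "finite U"
    and "U = S 0 \<union> S 1" and "S 0 \<inter> S 1 = {}"
    and "S 0 \<noteq> {}" and "S 1 \<noteq> {}"
    and "\<And>\<theta> x. x \<in> U \<Longrightarrow> g \<theta> x \<noteq> 0"
    and "\<And>\<theta> c. c \<in> {0,1} \<Longrightarrow> cmean g S \<theta> c \<noteq> 0"
    and "\<kappa> > 0" and "cd > 0"
  shows "equiv_max (\<lambda>\<theta>. - clust_obj g U S \<theta>) (L1 g U S)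
         \<and> equiv_max (loglik cd \<kappa> g U S) (L2 g U S)
         \<and> (\<forall>\<theta>. L1 g U S \<theta> \<le> L2 g U S \<theta>)"
proof -
  interpret pseudo_label_partition U S g
    using assms(1-3,6) by unfold_locales
  have "U \<noteq> {}" "real (card U) > 0"
    using assms(1,2,4) by (auto simp: card_gt_0_iff)
  have "equiv_max (\<lambda>\<theta>. - clust_obj g U S \<theta>) (L1 g U S)"
    by (rule equiv_maxI[where \<phi> = "\<lambda>t. 2 * t - 2"])
       (simp_all add: strict_mono_def neg_clust_obj_eq[OF \<open>U \<noteq> {}\<close>])
  moreover have "equiv_max (loglik cd \<kappa> g U S) (L2 g U S)"
    by (rule equiv_maxI[where \<phi> = "\<lambda>t. real (card U) * (ln cd - ln 2) + \<kappa> * real (card U) * t"])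
       (use assms(8) \<open>real (card U) > 0\<close> in \<open>simp_all add: strict_mono_def loglik_eq[OF assms(9)]\<close>)
  ultimately show ?thesis using L1_le_L2 by blast
qed

end
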